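(* Let $d\ge1$, $\vec\gamma\in\mathbb{C}^d$, and let $b,\beta_1,\beta_2\in\mathbb{C}$ be nonzero. For nonzero $\beta\in\mathbb{C}$ and $\vec\delta\in\mathbb{C}^d$, and a point $\alpha\in L$ with $1+b\alpha^{\beta}=0$, let $\phi(\vec a;\vec\delta,b,\beta)$ denote a smooth map from a neighborhood of $\vec 0\in\mathbb{C}^d$ to $L$ satisfying $\phi(\vec 0;\vec\delta,b,\beta)=\alpha$ and \[ 1+b\,\phi(\vec a;\vec\delta,b,\beta)^{\beta}+\sum_{i=1}^d a_i\,\phi(\vec a;\vec\delta,b,\beta)^{\delta_i}=0 \] for all $\vec a$ in that neighborhood. Let $\alpha_1\in L$ satisfy $1+b\alpha_1^{\beta_1}=0$ and let $\phi(\vec a;\vec\gamma,b,\beta_1)$ be such a map with $\phi(\vec 0)=\alpha_1$. Let $\alpha_2\in L$ be the point with $\log\alpha_2=\beta_2^{-1}\log\alpha_1$ (so $\alpha_2=\alpha_1^{1/\beta_2}$), and let $\phi(\vec a;\beta_2\vec\gamma,b,\beta_2\beta_1)$ be such a map with exponents $\beta_2\vec\gamma$ and $\beta_2\beta_1$ and with $\phi(\vec 0)=\alpha_2$. Then, as Taylor series about $\vec a=\vec 0$, \[ \phi(\vec a;\vec\gamma,b,\beta_1)^{1/\beta_2}=\phi(\vec a;\beta_2\vec\gamma,b,\beta_2\beta_1). \]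
   Context: $L$ is the Riemann surface of the logarithm, parametrized by triples $(r,\theta,n)$ with $r>0$, $\theta\in(-\pi,\pi]$, $n\in\mathbb{Z}$; for $z=(r,\theta,n)\in L$ and $\gamma\in\mathbb{C}$, $z^\gamma=e^{\gamma\ln r+i\gamma\theta+2\pi i n\gamma}$, and $\log z=\ln r+i\theta+2\pi i n$ (a bijection $L\to\mathbb{C}$). Taylor series of $L$-valued maps are taken in the local coordinate $z\mapsto z^1$. Note $1+b\alpha_2^{\beta_2\beta_1}=1+b\alpha_1^{\beta_1}=0$. *)

theory Defs
  imports "HOL-Analysis.Analysis"
begin

text \<open>The Riemann surface of the logarithm: triples (r, theta, n), r > 0, theta in (-pi, pi], n integer.\<close>
typedef L = "{(r::real, th::real, n::int). 0 < r \<and> -pi < th \<and> th \<le> pi}"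
  by (rule exI[of _ "(1, 0, 0)"]) simp

definition Llog :: "L \<Rightarrow> complex" where
  "Llog z = (case Rep_L z of (r, th, n) \<Rightarrow>
      complex_of_real (ln r) + \<i> * complex_of_real th + 2 * complex_of_real pi * \<i> * of_int n)"

definition Lpow :: "L \<Rightarrow> complex \<Rightarrow> complex" where
  "Lpow z g = (case Rep_L z of (r, th, n) \<Rightarrow>
      exp (g * complex_of_real (ln r) + \<i> * g * complex_of_real th
           + 2 * complex_of_real pi * \<i> * of_int n * g))"

definition is_phi_map ::
  "('n::finite) itself \<Rightarrow> (complex^'n) set \<Rightarrow> (complex^'n \<Rightarrow> L) \<Rightarrow> complex^'n \<Rightarrow> complex \<Rightarrow> complex \<Rightarrow> L \<Rightarrow> bool" where
  "is_phi_map _ U phi delta b beta alpha \<longleftrightarrow>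
     open U \<and> 0 \<in> U \<and> (Llog \<circ> phi) differentiable_on U \<and> phi 0 = alpha \<and>
     (\<forall>a\<in>U. 1 + b * Lpow (phi a) beta + (\<Sum>i\<in>UNIV. a $ i * Lpow (phi a) (delta $ i)) = 0)"

end

theory Submission
  imports Defs
begin

text \<open>In the chart \<open>w = log z\<close> both \<open>log \<phi>\<^sub>2\<close> and \<open>(log \<phi>\<^sub>1) / \<beta>\<^sub>2\<close> solve
  \<open>1 + b e\<^bsup>\<beta>\<^sub>2\<beta>\<^sub>1 w\<^esup> + \<Sum>\<^sub>i a\<^sub>i e\<^bsup>\<beta>\<^sub>2\<gamma>\<^sub>i w\<^esup> = 0\<close> and take the value \<open>log \<alpha>\<^sub>2\<close> at \<open>a = 0\<close>.
  The \<open>w\<close>-derivative of the left-hand side at \<open>(0, log \<alpha>\<^sub>2)\<close> is \<open>b \<beta>\<^sub>2\<beta>\<^sub>1 e\<^bsup>\<beta>\<^sub>2\<beta>\<^sub>1 log \<alpha>\<^sub>2\<^esup> \<noteq> 0\<close>,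
  so near that point the equation has at most one solution for each \<open>a\<close>; hence the two
  solutions agree near \<open>0\<close>, and \<open>z\<^bsup>1/\<beta>\<^sub>2\<^esup> = exp (log z / \<beta>\<^sub>2)\<close>.\<close>

lemma Lpow_eq_exp_Llog: "Lpow z g = exp (g * Llog z)"
  unfolding Lpow_def Llog_def by (cases "Rep_L z") (simp add: algebra_simps)

lemma inj_on_if_deriv_near_const:
  fixes h h' :: "complex \<Rightarrow> complex"
  assumes "convex S"
    and deriv: "\<And>w. w \<in> S \<Longrightarrow> (h has_field_derivative h' w) (at w within S)"
    and near: "\<And>w. w \<in> S \<Longrightarrow> norm (h' w - c) \<le> B" and "B < norm c"
  shows "inj_on h S"
proof (rule inj_onI)
  fix x y assume "x \<in> S" "y \<in> S" "h x = h y"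
  have "((\<lambda>w. h w - c * w) has_field_derivative h' w - c) (at w within S)" if "w \<in> S" for w
    using deriv[OF that] by (auto intro!: derivative_eq_intros)
  then have "norm ((h x - c * x) - (h y - c * y)) \<le> B * norm (x - y)"
    by (rule field_differentiable_bound[where f' = "\<lambda>w. h' w - c", OF \<open>convex S\<close>])
      (use near \<open>x \<in> S\<close> \<open>y \<in> S\<close> in auto)
  also have "(h x - c * x) - (h y - c * y) = c * (y - x)"
    using \<open>h x = h y\<close> by (simp add: algebra_simps)
  finally have "norm c * norm (x - y) \<le> B * norm (x - y)"
    by (simp add: norm_mult norm_minus_commute)
  with \<open>B < norm c\<close> show "x = y"
    by (cases "x = y") (auto dest: mult_right_le_imp_le)
qed

lemma implicit_solutions_eventually_eq:
  fixes F D :: "'a::t2_space \<Rightarrow> complex \<Rightarrow> complex" and f g :: "'a \<Rightarrow> complex"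
  assumes deriv: "\<And>a w. (F a has_field_derivative D a w) (at w)"
    and cont: "isCont (\<lambda>(a, w). D a w) (a0, w0)" and nonzero: "D a0 w0 \<noteq> 0"
    and f: "(f \<longlongrightarrow> w0) (nhds a0)" and g: "(g \<longlongrightarrow> w0) (nhds a0)"
    and eq: "\<forall>\<^sub>F a in nhds a0. F a (f a) = F a (g a)"
  shows "\<forall>\<^sub>F a in nhds a0. f a = g a"
proof -
  define c where "c = D a0 w0"
  have "c \<noteq> 0"
    using nonzero by (simp add: c_def)
  have "((\<lambda>(a, w). D a w) \<longlongrightarrow> c) (nhds (a0, w0))"
    using cont tendsto_at_iff_tendsto_nhds[of "\<lambda>(a, w). D a w" "(a0, w0)"]
    by (simp add: isCont_def c_def)
  then have "\<forall>\<^sub>F p in nhds (a0, w0). dist ((\<lambda>(a, w). D a w) p) c < norm c / 2"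
    using \<open>c \<noteq> 0\<close> by (intro tendstoD) simp_all
  then obtain Pa Pw where Pa: "eventually Pa (nhds a0)" and Pw: "eventually Pw (nhds w0)"
    and near: "\<And>a w. Pa a \<Longrightarrow> Pw w \<Longrightarrow> dist (D a w) c < norm c / 2"
    unfolding nhds_prod eventually_prod_filter by auto
  from Pw obtain r where "r > 0" and ball_Pw: "\<And>w. w \<in> ball w0 r \<Longrightarrow> Pw w"
    unfolding eventually_nhds_metric mem_ball by (metis dist_commute)
  have inj: "inj_on (F a) (ball w0 r)" if "Pa a" for a
  proof (rule inj_on_if_deriv_near_const[OF convex_ball])
    show "(F a has_field_derivative D a w) (at w within ball w0 r)" for w
      using deriv by (rule has_field_derivative_at_within)
    show "norm (D a w - c) \<le> norm c / 2" if "w \<in> ball w0 r" for w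
      using near[OF \<open>Pa a\<close> ball_Pw[OF that]] by (simp add: dist_norm)
    show "norm c / 2 < norm c"
      using \<open>c \<noteq> 0\<close> by simp
  qed
  have "\<forall>\<^sub>F a in nhds a0. f a \<in> ball w0 r" "\<forall>\<^sub>F a in nhds a0. g a \<in> ball w0 r"
    using tendstoD[OF f \<open>r > 0\<close>] tendstoD[OF g \<open>r > 0\<close>] by (simp_all add: dist_commute)
  with Pa eq show ?thesis
    by eventually_elim (meson inj inj_onD)
qed

definition chart_equation :: "complex^'n::finite \<Rightarrow> complex^'n \<Rightarrow> complex \<Rightarrow> complex \<Rightarrow> complex \<Rightarrow> complex"
  where "chart_equation a delta b beta w = 1 + b * exp (beta * w) + (\<Sum>i\<in>UNIV. a $ i * exp (delta $ i * w))"

lemma chart_equation_rescale: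
  assumes "c \<noteq> 0"
  shows "chart_equation a (c *s delta) b (c * beta) (w / c) = chart_equation a delta b beta w"
  using assms by (simp add: chart_equation_def)

lemma is_phi_map_Llog_tendsto:
  assumes "is_phi_map TYPE('n::finite) U phi delta b beta alpha"
  shows "((\<lambda>a. Llog (phi a)) \<longlongrightarrow> Llog alpha) (nhds 0)"
proof -
  have "isCont (Llog \<circ> phi) 0"
    using assms unfolding is_phi_map_def
    by (metis continuous_on_eq_continuous_at differentiable_imp_continuous_on)
  then show ?thesis
    using assms tendsto_at_iff_tendsto_nhds[of "Llog \<circ> phi" 0]
    by (simp add: isCont_def is_phi_map_def o_def)
qed

lemma is_phi_map_chart_equation:
  assumes "is_phi_map TYPE('n::finite) U phi delta b beta alpha"
  shows "\<forall>\<^sub>F a in nhds 0. chart_equation a delta b beta (Llog (phi a)) = 0"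
proof -
  have "\<forall>\<^sub>F a in nhds 0. a \<in> U"
    using assms unfolding is_phi_map_def by (auto intro: eventually_nhds_in_open)
  then show ?thesis
    by eventually_elim
      (use assms in \<open>simp add: is_phi_map_def chart_equation_def Lpow_eq_exp_Llog mult.commute\<close>)
qed

theorem theorem4p1:
  fixes gamma :: "complex^'n::finite" and b beta1 beta2 :: complex
    and alpha1 alpha2 :: L and phi1 phi2 :: "complex^'n \<Rightarrow> L"
    and U1 U2 :: "(complex^'n) set"
  assumes "b \<noteq> 0" and "beta1 \<noteq> 0" and "beta2 \<noteq> 0"
    and "1 + b * Lpow alpha1 beta1 = 0"
    and "is_phi_map TYPE('n) U1 phi1 gamma b beta1 alpha1"
    and "Llog alpha2 = Llog alpha1 / beta2"
    and "is_phi_map TYPE('n) U2 phi2 (beta2 *s gamma) b (beta2 * beta1) alpha2"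
  shows "\<forall>\<^sub>F a in nhds 0. Lpow (phi1 a) (1 / beta2) = Lpow (phi2 a) 1"
proof -
  define F where "F a = chart_equation a (beta2 *s gamma) b (beta2 * beta1)" for a
  define D where "D a w = b * (beta2 * beta1) * exp (beta2 * beta1 * w)
    + (\<Sum>i\<in>UNIV. a $ i * (beta2 *s gamma) $ i * exp ((beta2 *s gamma) $ i * w))"
    for a :: "complex^'n" and w
  have "(F a has_field_derivative D a w) (at w)" for a w
    unfolding F_def D_def chart_equation_def
    by (auto intro!: derivative_eq_intros simp: algebra_simps)
  moreover have "isCont (\<lambda>(a, w). D a w) (0, Llog alpha2)"
    unfolding D_def case_prod_beta' by (intro continuous_intros)
  moreover have "D 0 (Llog alpha2) \<noteq> 0"
    using assms(1-3) by (simp add: D_def)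
  moreover have "((\<lambda>a. Llog (phi1 a) / beta2) \<longlongrightarrow> Llog alpha2) (nhds 0)"
    using tendsto_divide[OF is_phi_map_Llog_tendsto[OF assms(5)] tendsto_const] assms(3,6) by simp
  moreover note is_phi_map_Llog_tendsto[OF assms(7)]
  moreover have "\<forall>\<^sub>F a in nhds 0. F a (Llog (phi1 a) / beta2) = F a (Llog (phi2 a))"
    using is_phi_map_chart_equation[OF assms(5)] is_phi_map_chart_equation[OF assms(7)]
    by eventually_elim (simp add: F_def chart_equation_rescale assms(3))
  ultimately have "\<forall>\<^sub>F a in nhds 0. Llog (phi1 a) / beta2 = Llog (phi2 a)"
    by (rule implicit_solutions_eventually_eq)
  then show ?thesis
    by eventually_elim (simp add: Lpow_eq_exp_Llog)
qed

end
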